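(* Let $a\in\omega\setminus\{0\}$ and $h(n)=2^{(a^n)}$. Then $\mathfrak d(\neq^*,h)\le\mathfrak d(1/a)$ and $\mathfrak b(\neq^*,h)\ge\mathfrak b(1/a)$.
   Context: For bit sequences $x,y\in{}^\omega2$, $x\leftrightarrow y=\{n:x(n)=y(n)\}$; for $Z\subseteq\omega$, $\underline\rho(Z)=\liminf_n|Z\cap[0,n)|/n$. $\mathfrak d(p)$ is the least cardinality of $G\subseteq{}^\omega2$ such that for every $x\in{}^\omega2$ some $y\in G$ has $\underline\rho(x\leftrightarrow y)>p$; $\mathfrak b(p)$ is the least cardinality of $F\subseteq{}^\omega2$ such that for every $y\in{}^\omega2$ some $x\in F$ has $\underline\rho(x\leftrightarrow y)\le p$. A function $y$ is $h$-bounded if $y(n)<h(n)$ for all $n$. $\mathfrak d(\neq^*,h)$ is the least cardinality of a set $G$ of $h$-bounded functions such that for every $x\in{}^\omega\omega$ some $y\in G$ satisfies $x(n)\ne y(n)$ for all but finitely many $n$; $\mathfrak b(\neq^*,h)$ is the least cardinality of $F\subseteq{}^\omega\omega$ such that for every $h$-bounded $y$ some $x\in F$ satisfies $x(n)=y(n)$ for infinitely many $n$. *)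

theory Defs
  imports Complex_Main "HOL-Library.Extended_Real"
begin

text \<open>Bit sequences are functions nat => bool (so x(n) in {False,True} = 2).\<close>

definition agree :: "(nat \<Rightarrow> 'b) \<Rightarrow> (nat \<Rightarrow> 'b) \<Rightarrow> nat set" where
  "agree x y = {n. x n = y n}"

definition lower_density :: "nat set \<Rightarrow> ereal" where
  "lower_density Z = liminf (\<lambda>n. ereal (real (card (Z \<inter> {..<n})) / real n))"

definition d_family :: "real \<Rightarrow> (nat \<Rightarrow> bool) set \<Rightarrow> bool" where
  "d_family p G \<longleftrightarrow> (\<forall>x. \<exists>y\<in>G. lower_density (agree x y) > ereal p)"

definition b_family :: "real \<Rightarrow> (nat \<Rightarrow> bool) set \<Rightarrow> bool" where
  "b_family p F \<longleftrightarrow> (\<forall>y. \<exists>x\<in>F. lower_density (agree x y) \<le> ereal p)"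

definition h_bounded :: "(nat \<Rightarrow> nat) \<Rightarrow> (nat \<Rightarrow> nat) \<Rightarrow> bool" where
  "h_bounded h y \<longleftrightarrow> (\<forall>n. y n < h n)"

definition d_neq_family :: "(nat \<Rightarrow> nat) \<Rightarrow> (nat \<Rightarrow> nat) set \<Rightarrow> bool" where
  "d_neq_family h G \<longleftrightarrow> (\<forall>y\<in>G. h_bounded h y) \<and>
     (\<forall>x::nat \<Rightarrow> nat. \<exists>y\<in>G. \<forall>\<^sub>F n in sequentially. x n \<noteq> y n)"

definition b_neq_family :: "(nat \<Rightarrow> nat) \<Rightarrow> (nat \<Rightarrow> nat) set \<Rightarrow> bool" where
  "b_neq_family h F \<longleftrightarrow>
     (\<forall>y. h_bounded h y \<longrightarrow> (\<exists>x\<in>F. \<exists>\<^sub>F n in sequentially. x n = y n))"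

end

theory Submission
  imports Defs
begin

text \<open>Cut \<open>\<omega>\<close> into consecutive blocks, the \<open>n\<close>-th of length \<open>a ^ n\<close>, so that a value
  below \<open>h n = 2 ^ a ^ n\<close> is exactly the binary code of a bit string on block \<open>n\<close>. Decode a
  function \<open>x\<close> into a bit sequence by reading \<open>x n\<close> as a bit string on block \<open>n\<close> and flipping
  every bit. Whenever \<open>x n\<close> is the code of \<open>g\<close> on block \<open>n\<close>, the decoded sequence disagrees
  with \<open>g\<close> on the whole block, and the blocks before block \<open>n\<close> make up at most a \<open>1/a\<close>
  fraction of an initial segment ending with block \<open>n\<close>. So if \<open>x\<close> hits the codes of \<open>g\<close>
  infinitely often, the agreement has lower density at most \<open>1/a\<close>. Hence coding each member of
  a witness family for \<open>d(1/a)\<close> gives one for \<open>d(\<noteq>*, h)\<close>, and decoding each member of a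
  witness family for \<open>b(\<noteq>*, h)\<close> gives one for \<open>b(1/a)\<close>.\<close>

definition block_start :: "nat \<Rightarrow> nat \<Rightarrow> nat" where
  "block_start a n = (\<Sum>k<n. a ^ k)"

definition block_of :: "nat \<Rightarrow> nat \<Rightarrow> nat" where
  "block_of a m = (LEAST n. m < block_start a (Suc n))"

definition block_code :: "nat \<Rightarrow> (nat \<Rightarrow> bool) \<Rightarrow> nat \<Rightarrow> nat" where
  "block_code a g n = horner_sum of_bool 2 (map (\<lambda>i. g (block_start a n + i)) [0..<a ^ n])"

definition flipped_decode :: "nat \<Rightarrow> (nat \<Rightarrow> nat) \<Rightarrow> nat \<Rightarrow> bool" where
  "flipped_decode a x m = (\<not> bit (x (block_of a m)) (m - block_start a (block_of a m)))"

lemma block_start_Suc: "block_start a (Suc n) = block_start a n + a ^ n"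
  by (simp add: block_start_def)

lemma block_start_mono:
  assumes "k \<le> n" shows "block_start a k \<le> block_start a n"
  unfolding block_start_def by (rule sum_mono2) (use assms in auto)

lemma block_start_ge:
  assumes "a \<noteq> 0" shows "n \<le> block_start a n"
proof (induction n)
  case (Suc n)
  have "1 \<le> a ^ n" using assms by simp
  with Suc show ?case by (simp add: block_start_Suc)
qed (simp add: block_start_def)

lemma mult_block_start_le: "a * block_start a n \<le> block_start a (Suc n)"
  by (induction n) (simp_all add: block_start_def block_start_Suc algebra_simps)

lemma block_of_eq:
  assumes "a \<noteq> 0" "i < a ^ n" shows "block_of a (block_start a n + i) = n"
  unfolding block_of_def
proof (rule Least_equality)
  show "block_start a n + i < block_start a (Suc n)"
    using assms by (simp add: block_start_Suc)
next
  fix k assume "block_start a n + i < block_start a (Suc k)"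
  then show "n \<le> k"
    using block_start_mono[of "Suc k" n a] by (cases "Suc k \<le> n") auto
qed

lemma block_code_less: "block_code a g n < 2 ^ (a ^ n)"
  unfolding block_code_def
  using horner_sum_of_bool_2_less[of "map (\<lambda>i. g (block_start a n + i)) [0..<a ^ n]"] by simp

lemma bit_block_code:
  assumes "i < a ^ n" shows "bit (block_code a g n) i = g (block_start a n + i)"
  unfolding block_code_def using assms by (simp add: bit_horner_sum_bit_iff)

lemma lower_density_le_if_unbounded:
  assumes "\<And>N. \<exists>m\<ge>N. real (card (Z \<inter> {..<m})) / real m \<le> p"
  shows "lower_density Z \<le> ereal p"
proof -
  have "(INF m\<in>{N..}. ereal (real (card (Z \<inter> {..<m})) / real m)) \<le> ereal p" for N
    using assms[of N] by (auto intro: INF_lower2)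
  then show ?thesis
    unfolding lower_density_def liminf_SUP_INF by (intro SUP_least) auto
qed

lemma agree_flipped_decode_subset:
  assumes "a \<noteq> 0" "block_code a g n = x n"
  shows "agree (flipped_decode a x) g \<inter> {..<block_start a (Suc n)} \<subseteq> {..<block_start a n}"
proof
  fix m assume m: "m \<in> agree (flipped_decode a x) g \<inter> {..<block_start a (Suc n)}"
  show "m \<in> {..<block_start a n}"
  proof (rule ccontr)
    assume "m \<notin> {..<block_start a n}"
    then obtain i where mi: "m = block_start a n + i"
      by (metis lessThan_iff not_less le_Suc_ex)
    with m have i: "i < a ^ n" by (simp add: block_start_Suc)
    have "flipped_decode a x m = (\<not> g m)"
      using bit_block_code[OF i, of g] assms
      by (simp add: flipped_decode_def mi block_of_eq[OF assms(1) i])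
    with m show False by (simp add: agree_def)
  qed
qed

lemma agreement_ratio_at_block_end:
  assumes "a \<noteq> 0" "block_code a g n = x n"
  shows "real (card (agree (flipped_decode a x) g \<inter> {..<block_start a (Suc n)}))
           / real (block_start a (Suc n)) \<le> 1 / real a"
proof -
  let ?S = "block_start a n" and ?S' = "block_start a (Suc n)"
  have card_le: "card (agree (flipped_decode a x) g \<inter> {..<?S'}) \<le> ?S"
    using card_mono[OF _ agree_flipped_decode_subset[of a g n x, OF assms]] by simp
  have pos: "?S' > 0" using block_start_ge[OF assms(1), of "Suc n"] by simp
  have "real a * real ?S \<le> real ?S'"
    using mult_block_start_le[of a n] by (simp flip: of_nat_mult)
  then have "real ?S / real ?S' \<le> 1 / real a"
    using pos assms(1) by (simp add: divide_simps mult.commute)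
  moreover have "real (card (agree (flipped_decode a x) g \<inter> {..<?S'})) / real ?S' \<le> real ?S / real ?S'"
    using card_le pos by (simp add: divide_right_mono)
  ultimately show ?thesis by linarith
qed

lemma lower_density_agree_flipped_decode_le:
  assumes "a \<noteq> 0" and "\<exists>\<^sub>F n in sequentially. block_code a g n = x n"
  shows "lower_density (agree (flipped_decode a x) g) \<le> ereal (1 / real a)"
proof (rule lower_density_le_if_unbounded)
  fix N
  obtain n where n: "N \<le> n" "block_code a g n = x n"
    using assms(2) unfolding frequently_sequentially by blast
  have "N \<le> block_start a (Suc n)" using block_start_ge[OF assms(1), of "Suc n"] n(1) by simp
  with agreement_ratio_at_block_end[of a g n x, OF assms(1) n(2)]
  show "\<exists>m\<ge>N. real (card (agree (flipped_decode a x) g \<inter> {..<m})) / real m \<le> 1 / real a"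
    by blast
qed

lemma d_neq_family_image_block_code:
  assumes "a \<noteq> 0" "d_family (1 / real a) G"
  shows "d_neq_family (\<lambda>n. 2 ^ (a ^ n)) (block_code a ` G)"
  unfolding d_neq_family_def h_bounded_def
proof (intro conjI ballI allI)
  fix x :: "nat \<Rightarrow> nat"
  obtain g where g: "g \<in> G" "lower_density (agree (flipped_decode a x) g) > ereal (1 / real a)"
    using assms(2) unfolding d_family_def by blast
  then have "\<not> (\<exists>\<^sub>F n in sequentially. block_code a g n = x n)"
    using lower_density_agree_flipped_decode_le[OF assms(1)] by force
  then have "\<forall>\<^sub>F n in sequentially. x n \<noteq> block_code a g n"
    by (simp add: not_frequently eq_commute)
  with g(1) show "\<exists>y\<in>block_code a ` G. \<forall>\<^sub>F n in sequentially. x n \<noteq> y n" by blast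
qed (auto simp: block_code_less)

lemma b_family_image_flipped_decode:
  assumes "a \<noteq> 0" "b_neq_family (\<lambda>n. 2 ^ (a ^ n)) F"
  shows "b_family (1 / real a) (flipped_decode a ` F)"
  unfolding b_family_def
proof
  fix g
  have "h_bounded (\<lambda>n. 2 ^ (a ^ n)) (block_code a g)"
    by (simp add: h_bounded_def block_code_less)
  then obtain x where "x \<in> F" "\<exists>\<^sub>F n in sequentially. block_code a g n = x n"
    using assms(2) unfolding b_neq_family_def by (auto simp: eq_commute)
  then show "\<exists>y\<in>flipped_decode a ` F. lower_density (agree y g) \<le> ereal (1 / real a)"
    using lower_density_agree_flipped_decode_le[OF assms(1)] by blast
qed

theorem mainTheorem8:
  fixes a :: nat and h :: "nat \<Rightarrow> nat"
  assumes "a \<noteq> 0"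
    and "\<And>n. h n = 2 ^ (a ^ n)"
  shows "(\<forall>G. d_family (1 / real a) G \<longrightarrow>
            (\<exists>G'. d_neq_family h G' \<and> ordLeq2 (card_of G') (card_of G)))
       \<and> (\<forall>F. b_neq_family h F \<longrightarrow>
            (\<exists>F'. b_family (1 / real a) F' \<and> ordLeq2 (card_of F') (card_of F)))"
proof -
  have h: "(\<lambda>n. 2 ^ (a ^ n)) = h" using assms(2) by auto
  show ?thesis
  proof (intro conjI allI impI)
    fix G assume "d_family (1 / real a) G"
    then have "d_neq_family h (block_code a ` G)"
      using d_neq_family_image_block_code[OF assms(1)] h by simp
    then show "\<exists>G'. d_neq_family h G' \<and> ordLeq2 (card_of G') (card_of G)"
      using card_of_image by blast
  next
    fix F assume "b_neq_family h F"
    then have "b_family (1 / real a) (flipped_decode a ` F)"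
      using b_family_image_flipped_decode[OF assms(1)] h by simp
    then show "\<exists>F'. b_family (1 / real a) F' \<and> ordLeq2 (card_of F') (card_of F)"
      using card_of_image by blast
  qed
qed

end
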